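(* Let $K$ be a field of characteristic $\neq 2$, $n\ge1$, and let $\mathcal C$ be an EACP over $K$ with natural basis $\{h_1,\dots,h_n,r\}$ and structural constants $a_{ij},b_i$. For $a\in\mathcal C$ let $L_a(x)=ax$, write $L_i=L_{h_i}$, and for $x=\sum_i x_ih_i+ur$ let ${\bf b}(x)=\sum_{i=1}^n b_ix_i$. Then for all $x\in\mathcal C$, all $m\ge1$ and all $i,i_1,\dots,i_m\in\{1,\dots,n\}$: $$L_{i_m}\circ L_{i_{m-1}}\circ\cdots\circ L_{i_1}(x)=\Big(\frac1{2^{m-1}}\prod_{j=1}^{m-1}b_{i_j}\Big)L_{i_m}(x),$$ $$L_r\circ L_i(x)=\frac12\sum_{j=1}^n a_{ij}L_j(x),\qquad L_i\circ L_r(x)=\frac{{\bf b}(x)}2\,L_i(r).$$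
   Context: An EACP over a field $K$ (characteristic $\neq 2$) is a $K$-algebra $\mathcal C$ with a basis $\{h_1,\dots,h_n,r\}$ (called a natural basis) whose multiplication is determined by bilinearity from $$h_ir=rh_i=\tfrac12\Big(\sum_{j=1}^n a_{ij}h_j+b_ir\Big),\qquad h_ih_j=0\ (i,j=1,\dots,n),\qquad rr=0,$$ for some constants $a_{ij},b_i\in K$. An empty product equals $1$. *)

theory Defs
  imports Main "HOL-Library.Function_Algebras"
begin

text \<open>Coordinate model of an EACP with natural basis h_1,...,h_n, r over a field 'k.
  An element x is a coordinate function nat => 'k: x 0 is the coefficient of r and
  x i (1 <= i <= n) is the coefficient of h_i; coordinates above n are zero.\<close>

definition eacp_carrier :: "nat \<Rightarrow> (nat \<Rightarrow> 'k::field) set" where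
  "eacp_carrier n = {x. \<forall>k>n. x k = 0}"

definition eacp_h :: "nat \<Rightarrow> nat \<Rightarrow> 'k::field" where
  "eacp_h i = (\<lambda>k. if k = i then 1 else 0)"

definition eacp_r :: "nat \<Rightarrow> 'k::field" where
  "eacp_r = (\<lambda>k. if k = 0 then 1 else 0)"

definition eacp_smul :: "'k::field \<Rightarrow> (nat \<Rightarrow> 'k) \<Rightarrow> nat \<Rightarrow> 'k" where
  "eacp_smul c x = (\<lambda>k. c * x k)"

text \<open>Bilinear extension of h_i r = r h_i = (1/2)(sum_j a_ij h_j + b_i r), h_i h_j = 0, r r = 0.\<close>
definition eacp_mult :: "nat \<Rightarrow> (nat \<Rightarrow> nat \<Rightarrow> 'k::field) \<Rightarrow> (nat \<Rightarrow> 'k)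
    \<Rightarrow> (nat \<Rightarrow> 'k) \<Rightarrow> (nat \<Rightarrow> 'k) \<Rightarrow> nat \<Rightarrow> 'k" where
  "eacp_mult n a b x y = (\<lambda>k.
     if k = 0 then (1/2) * (\<Sum>i=1..n. (x i * y 0 + x 0 * y i) * b i)
     else if k \<le> n then (1/2) * (\<Sum>i=1..n. (x i * y 0 + x 0 * y i) * a i k)
     else 0)"

definition eacp_L :: "nat \<Rightarrow> (nat \<Rightarrow> nat \<Rightarrow> 'k::field) \<Rightarrow> (nat \<Rightarrow> 'k)
    \<Rightarrow> (nat \<Rightarrow> 'k) \<Rightarrow> (nat \<Rightarrow> 'k) \<Rightarrow> nat \<Rightarrow> 'k" where
  "eacp_L n a b u x = eacp_mult n a b u x"

definition eacp_bform :: "nat \<Rightarrow> (nat \<Rightarrow> 'k::field) \<Rightarrow> (nat \<Rightarrow> 'k) \<Rightarrow> 'k" where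
  "eacp_bform n b x = (\<Sum>i=1..n. b i * x i)"

end

theory Submission
  imports Defs
begin

text \<open>Left multiplication by a basis vector \<open>h\<^sub>i\<close> only sees the \<open>r\<close>-coordinate of its argument,
  since \<open>h\<^sub>i h\<^sub>j = 0\<close>, and it lands back in \<open>r\<close>-coordinate \<open>b\<^sub>i/2\<close>. Hence every further \<open>L\<^sub>j\<close>
  just rescales by \<open>b\<^sub>i/2\<close>, which gives the product formula by induction on \<open>m\<close>. None of this needs
  \<open>2 \<noteq> 0\<close> or \<open>n \<ge> 1\<close>: over a field, \<open>1/2 = 0\<close> when \<open>2 = 0\<close>, and the identities still hold.\<close>

lemma sum_fun_apply: "(sum f A) k = (\<Sum>j\<in>A. f j k)"
  by (induction A rule: infinite_finite_induct) auto

lemma eacp_smul_smul: "eacp_smul c (eacp_smul d x) = eacp_smul (c * d) x"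
  by (simp add: eacp_smul_def mult.assoc)

lemma eacp_L_smul: "eacp_L n a b u (eacp_smul c y) = eacp_smul c (eacp_L n a b u y)"
  by (rule ext) (simp add: eacp_L_def eacp_mult_def eacp_smul_def sum_distrib_left algebra_simps)

lemma eacp_L_h:
  assumes "i \<in> {1..n}"
  shows "eacp_L n a b (eacp_h i) y =
    (\<lambda>k. if k = 0 then y 0 * b i / 2 else if k \<le> n then y 0 * a i k / 2 else (0::'k::field))"
proof -
  have pick: "(\<Sum>l=1..n. (eacp_h i l * y 0 + eacp_h i 0 * y l) * f l) = y 0 * f i"
    for f :: "nat \<Rightarrow> 'k"
  proof -
    have "(\<Sum>l=1..n. (eacp_h i l * y 0 + eacp_h i 0 * y l) * f l)
        = (\<Sum>l=1..n. if l = i then y 0 * f l else 0)"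
      by (rule sum.cong) (use assms in \<open>auto simp: eacp_h_def\<close>)
    also have "\<dots> = y 0 * f i"
      using assms by simp
    finally show ?thesis .
  qed
  show ?thesis
    unfolding eacp_L_def eacp_mult_def pick by (rule ext) simp
qed

lemma eacp_L_r:
  "eacp_L n a b eacp_r y =
    (\<lambda>k. if k = 0 then (\<Sum>i=1..n. y i * b i) / 2
         else if k \<le> n then (\<Sum>i=1..n. y i * a i k) / 2 else (0::'k::field))"
proof -
  have drop_r: "(\<Sum>i=1..n. (eacp_r i * y 0 + eacp_r 0 * y i) * f i) = (\<Sum>i=1..n. y i * f i)"
    for f :: "nat \<Rightarrow> 'k"
    by (rule sum.cong) (auto simp: eacp_r_def)
  show ?thesis
    unfolding eacp_L_def eacp_mult_def drop_r by (rule ext) simp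
qed

lemma eacp_L_h_eq_smul:
  assumes "i \<in> {1..n}"
  shows "eacp_L n a b (eacp_h i) y = eacp_smul (y 0) (eacp_L n a b (eacp_h i) eacp_r)"
  by (rule ext) (simp add: eacp_L_h[OF assms] eacp_smul_def eacp_r_def)

lemma eacp_L_h_L_h:
  assumes "i \<in> {1..n}" "j \<in> {1..n}"
  shows "eacp_L n a b (eacp_h j) (eacp_L n a b (eacp_h i) y)
       = eacp_smul (b i / 2) (eacp_L n a b (eacp_h j) y)"
proof -
  have "eacp_L n a b (eacp_h i) y 0 = b i / 2 * y 0"
    by (simp add: eacp_L_h[OF assms(1)])
  then show ?thesis
    by (metis eacp_L_h_eq_smul[OF assms(2)] eacp_smul_smul)
qed

lemma fold_eacp_L_h:
  assumes "m \<ge> 1" "\<forall>j\<in>{1..m}. is j \<in> {1..n}"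
  shows "fold (\<lambda>j y. eacp_L n a b (eacp_h (is j)) y) [1..<m+1] x
       = eacp_smul ((1 / 2 ^ (m - 1)) * (\<Prod>j=1..m-1. b (is j)))
                   (eacp_L n a b (eacp_h (is m)) x)"
  using assms
proof (induction m rule: dec_induct)
  case base
  then show ?case
    by (simp add: eacp_smul_def)
next
  case (step m)
  let ?L = "\<lambda>j. eacp_L n a b (eacp_h (is j))"
  let ?c = "(1 / 2 ^ (m - 1)) * (\<Prod>j=1..m-1. b (is j))"
  have coeff: "?c * (b (is m) / 2) = (1 / 2 ^ (Suc m - 1)) * (\<Prod>j=1..Suc m-1. b (is j))"
    using \<open>1 \<le> m\<close> by (cases m) (simp_all add: prod.nat_ivl_Suc')
  have "fold (\<lambda>j. ?L j) [1..<Suc m + 1] x = ?L (Suc m) (fold (\<lambda>j. ?L j) [1..<m + 1] x)"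
    by simp
  also have "\<dots> = ?L (Suc m) (eacp_smul ?c (?L m x))"
    using step by simp
  also have "\<dots> = eacp_smul (?c * (b (is m) / 2)) (?L (Suc m) x)"
    using step by (simp add: eacp_L_smul eacp_L_h_L_h eacp_smul_smul)
  finally show ?case
    by (simp only: coeff)
qed

lemma eacp_L_r_L_h:
  assumes i: "i \<in> {1..n}"
  shows "eacp_L n a b eacp_r (eacp_L n a b (eacp_h i) x)
       = eacp_smul (1/2) (\<Sum>j=1..n. eacp_smul (a i j) (eacp_L n a b (eacp_h j) x))"
proof (rule ext)
  fix k
  have left: "(\<Sum>j=1..n. eacp_L n a b (eacp_h i) x j * f j) = (\<Sum>j=1..n. x 0 * a i j / 2 * f j)"
    for f :: "nat \<Rightarrow> 'a"
    by (rule sum.cong) (auto simp: eacp_L_h[OF i])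
  have right: "(\<Sum>j=1..n. eacp_smul (a i j) (eacp_L n a b (eacp_h j) x)) k
      = (\<Sum>j=1..n. a i j * (if k = 0 then x 0 * b j / 2 else if k \<le> n then x 0 * a j k / 2 else 0))"
    unfolding sum_fun_apply eacp_smul_def by (rule sum.cong) (auto simp: eacp_L_h)
  show "eacp_L n a b eacp_r (eacp_L n a b (eacp_h i) x) k
      = eacp_smul (1/2) (\<Sum>j=1..n. eacp_smul (a i j) (eacp_L n a b (eacp_h j) x)) k"
    unfolding eacp_smul_def[of "1/2"] right eacp_L_r left
    by (simp add: sum_distrib_left sum_divide_distrib algebra_simps)
qed

lemma eacp_L_h_L_r:
  assumes "i \<in> {1..n}"
  shows "eacp_L n a b (eacp_h i) (eacp_L n a b eacp_r x)
       = eacp_smul (eacp_bform n b x / 2) (eacp_L n a b (eacp_h i) eacp_r)"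
proof -
  have "eacp_L n a b eacp_r x 0 = eacp_bform n b x / 2"
    by (simp add: eacp_L_r eacp_bform_def mult.commute)
  then show ?thesis
    using eacp_L_h_eq_smul[OF assms] by metis
qed

theorem mainTheorem11:
  fixes n :: nat and a :: "nat \<Rightarrow> nat \<Rightarrow> 'k::field" and b :: "nat \<Rightarrow> 'k"
  assumes char: "(2::'k) \<noteq> 0"
    and n: "n \<ge> 1"
  shows
    "(\<forall>x \<in> eacp_carrier n. \<forall>m \<ge> 1. \<forall>is :: nat \<Rightarrow> nat.
        (\<forall>j\<in>{1..m}. is j \<in> {1..n}) \<longrightarrow>
        fold (\<lambda>j y. eacp_L n a b (eacp_h (is j)) y) [1..<m+1] x
          = eacp_smul ((1 / 2 ^ (m - 1)) * (\<Prod>j=1..m-1. b (is j)))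
                      (eacp_L n a b (eacp_h (is m)) x))
     \<and> (\<forall>x \<in> eacp_carrier n. \<forall>i \<in> {1..n}.
        eacp_L n a b eacp_r (eacp_L n a b (eacp_h i) x)
          = eacp_smul (1/2) (\<Sum>j=1..n. eacp_smul (a i j) (eacp_L n a b (eacp_h j) x)))
     \<and> (\<forall>x \<in> eacp_carrier n. \<forall>i \<in> {1..n}.
        eacp_L n a b (eacp_h i) (eacp_L n a b eacp_r x)
          = eacp_smul (eacp_bform n b x / 2) (eacp_L n a b (eacp_h i) eacp_r))"
  using fold_eacp_L_h eacp_L_r_L_h eacp_L_h_L_r by blast

end
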